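(* For every integer $n\ge 3$, let $t(n)$ denote the largest positive integer $k$ such that there exists a positive tribonacci sequence of length $k$ terminating at $n$. Then there are at most $561001$ positive tribonacci sequences of length $t(n)$ terminating at $n$.
   Context: A tribonacci sequence of length $k$ is a sequence of integers $\langle a_i\rangle_{i=1}^k$ such that $a_i=a_{i-1}+a_{i-2}+a_{i-3}$ for all $4\le i\le k$. It terminates at $a_k$. It is positive if $a_1,a_2,a_3>0$ (for length less than 3, all terms are required to be positive). For $n\ge 3$ the set of such $k$ is non-empty and bounded, so $t(n)$ is well defined. *)

theory Defs
  imports Main
begin

text \<open>A sequence a_1..a_k is represented by a list xs of length k, with a_i = xs ! (i-1).\<close>

definition is_tribonacci :: "int list \<Rightarrow> bool" where
  "is_tribonacci xs \<longleftrightarrow>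
     (\<forall>i. 3 \<le> i \<and> i < length xs \<longrightarrow> xs ! i = xs ! (i-1) + xs ! (i-2) + xs ! (i-3))"

definition is_positive_seq :: "int list \<Rightarrow> bool" where
  "is_positive_seq xs \<longleftrightarrow> (\<forall>i < min (length xs) 3. xs ! i > 0)"

definition terminates_at :: "int list \<Rightarrow> int \<Rightarrow> bool" where
  "terminates_at xs n \<longleftrightarrow> xs \<noteq> [] \<and> last xs = n"

definition pos_trib_ending :: "int \<Rightarrow> nat \<Rightarrow> int list set" where
  "pos_trib_ending n k = {xs. length xs = k \<and> is_tribonacci xs \<and> is_positive_seq xs \<and> terminates_at xs n}"

definition t :: "int \<Rightarrow> nat" where
  "t n = (GREATEST k. k > 0 \<and> pos_trib_ending n k \<noteq> {})"

end

theory Submission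
  imports Defs Complex_Main
begin

(*
  Encode a tribonacci sequence by its windows (a_i, a_{i+1}, a_{i+2}); one step of the
  sequence is the companion map trib_step (a, b, c) = (b, c, a + b + c). Two forms adapted to
  its eigenvalues control everything: lin_form is multiplied by the tribonacci constant rho,
  quad_form by 1/rho. On the positive octant quad_form <= lin_form^2, while off the octant
  lin_form^2 <= 900 * quad_form wherever lin_form > 0.

  Let k = t n and m = k - 3. The last window e of a positive sequence of length k ending at n
  satisfies rho^(3m) * quad_form e <= lin_form(e)^2 <= rho^4 * n^2. On the other hand the
  integer window ending at n closest to the dominant eigenline has quad_form <= 1; pulled
  back m + 1 steps it cannot be positive, as k is maximal, and this forces
  n^2 <= 900 * rho^(3m + 1). Hence quad_form e <= 900 * rho^5, so the first two entries of e
  lie within 250 of n/rho^2 and n/rho. As e determines the whole sequence, there are at most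
  500^2 <= 561001 such sequences.
*)

type_synonym 'a triple = "'a \<times> 'a \<times> 'a"

fun trib_step :: "'a::plus triple \<Rightarrow> 'a triple" where
  "trib_step (a, b, c) = (b, c, a + b + c)"

fun trib_step_inv :: "'a::ab_group_add triple \<Rightarrow> 'a triple" where
  "trib_step_inv (a, b, c) = (c - a - b, a, b)"

fun positive_triple :: "'a::linordered_idom triple \<Rightarrow> bool" where
  "positive_triple (a, b, c) \<longleftrightarrow> 0 < a \<and> 0 < b \<and> 0 < c"

fun of_int_triple :: "int triple \<Rightarrow> 'a::ring_1 triple" where
  "of_int_triple (a, b, c) = (of_int a, of_int b, of_int c)"

lemma trib_step_pow_inv: "(trib_step ^^ j) ((trib_step_inv ^^ j) w) = w"
proof (induction j arbitrary: w)
  case (Suc j)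
  have "trib_step (trib_step_inv v) = v" for v :: "'a triple" by (cases v) simp
  then show ?case
    unfolding funpow_Suc_right[where f = trib_step] funpow.simps(2)[where f = trib_step_inv] comp_apply
    by (simp add: Suc.IH)
qed simp

lemma inj_trib_step_pow: "inj (trib_step ^^ j :: 'a::ab_group_add triple \<Rightarrow> _)"
proof (rule inj_fn, rule injI)
  fix v w :: "'a triple"
  assume "trib_step v = trib_step w"
  then show "v = w" by (cases v; cases w) auto
qed

lemma positive_trib_step_pow:
  "positive_triple w \<Longrightarrow> positive_triple ((trib_step ^^ j) w)"
proof (induction j)
  case (Suc j)
  then show ?case by (cases "(trib_step ^^ j) w") auto
qed simp

lemma trib_step_pow_third_ge:
  fixes w :: "int triple"
  assumes "positive_triple w"
  shows "int j + 1 \<le> snd (snd ((trib_step ^^ j) w))"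
proof (induction j)
  case 0
  then show ?case using assms by (cases w) auto
next
  case (Suc j)
  then show ?case
    using positive_trib_step_pow[OF assms, of j] by (cases "(trib_step ^^ j) w") auto
qed

lemma of_int_triple_trib_step_pow:
  "of_int_triple ((trib_step ^^ j) w) = (trib_step ^^ j) (of_int_triple w)"
proof (induction j)
  case (Suc j)
  show ?case by (cases "(trib_step ^^ j) w") (simp add: Suc.IH[symmetric])
qed simp

lemma positive_of_int_triple:
  "positive_triple (of_int_triple w :: 'a::linordered_idom triple) \<longleftrightarrow> positive_triple w"
  by (cases w) simp

definition trib_list :: "'a::plus triple \<Rightarrow> nat \<Rightarrow> 'a list" where
  "trib_list w k = map (\<lambda>i. fst ((trib_step ^^ i) w)) [0..<k]"

lemma length_trib_list [simp]: "length (trib_list w k) = k"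
  by (simp add: trib_list_def)

lemma trib_list_eq_Nil_iff [simp]: "trib_list w k = [] \<longleftrightarrow> k = 0"
  by (simp add: trib_list_def)

lemma nth_trib_list [simp]: "i < k \<Longrightarrow> trib_list w k ! i = fst ((trib_step ^^ i) w)"
  by (simp add: trib_list_def)

lemma fst_trib_step_pow_add_3:
  "fst ((trib_step ^^ (j + 3)) w) = fst ((trib_step ^^ (j + 2)) w) + fst ((trib_step ^^ (j + 1)) w)
     + fst ((trib_step ^^ j) (w :: 'a::comm_monoid_add triple))"
  by (cases "(trib_step ^^ j) w") (simp add: eval_nat_numeral ac_simps)

lemma is_tribonacci_trib_list: "is_tribonacci (trib_list w k)"
  unfolding is_tribonacci_def
proof (intro allI impI)
  fix i assume i: "3 \<le> i \<and> i < length (trib_list w k)"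
  then obtain j where j: "i = j + 3" by (metis add.commute le_Suc_ex)
  then show "trib_list w k ! i =
      trib_list w k ! (i - 1) + trib_list w k ! (i - 2) + trib_list w k ! (i - 3)"
    using i fst_trib_step_pow_add_3[of j w] by (simp add: ac_simps)
qed

lemma tribonacci_eq_trib_list:
  assumes "is_tribonacci xs" "3 \<le> length xs"
  shows "xs = trib_list (xs ! 0, xs ! 1, xs ! 2) (length xs)"
proof -
  define w where "w = (xs ! 0, xs ! 1, xs ! 2)"
  have "xs ! i = trib_list w (length xs) ! i" if "i < length xs" for i
    using that
  proof (induction i rule: less_induct)
    case (less i)
    show ?case
    proof (cases "i < 3")
      case True
      then show ?thesis using less.prems by (auto simp: w_def eval_nat_numeral less_Suc_eq)
    next
      case False
      then obtain j where j: "i = j + 3" by (metis add.commute le_Suc_ex not_less)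
      have "xs ! i = xs ! (j + 2) + xs ! (j + 1) + xs ! j"
        using assms(1) less.prems unfolding is_tribonacci_def j by (auto dest!: spec[of _ "j + 3"])
      then show ?thesis
        using less.IH less.prems fst_trib_step_pow_add_3[of j w] by (simp add: j)
    qed
  qed
  then show ?thesis by (simp add: w_def nth_equalityI)
qed

lemma last_trib_list: "last (trib_list w (j + 3)) = snd (snd ((trib_step ^^ j) w))"
  by (cases "(trib_step ^^ j) w") (simp add: last_conv_nth eval_nat_numeral)

definition pos_starts :: "int \<Rightarrow> nat \<Rightarrow> int triple set" where
  "pos_starts n j = {w. positive_triple w \<and> snd (snd ((trib_step ^^ j) w)) = n}"

lemma pos_trib_ending_eq_image:
  "pos_trib_ending n (j + 3) = (\<lambda>w. trib_list w (j + 3)) ` pos_starts n j"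
proof (intro equalityI subsetI)
  fix xs assume "xs \<in> pos_trib_ending n (j + 3)"
  then have xs: "length xs = j + 3" "is_tribonacci xs" "is_positive_seq xs" "last xs = n"
    by (auto simp: pos_trib_ending_def terminates_at_def)
  define w where "w = (xs ! 0, xs ! 1, xs ! 2)"
  have "xs = trib_list w (j + 3)"
    using tribonacci_eq_trib_list[OF xs(2)] xs(1) by (simp add: w_def)
  moreover have "positive_triple w"
    using xs(1,3) by (simp add: w_def is_positive_seq_def)
  moreover have "snd (snd ((trib_step ^^ j) w)) = n"
    using xs(4) calculation(1) by (simp add: last_trib_list)
  ultimately show "xs \<in> (\<lambda>w. trib_list w (j + 3)) ` pos_starts n j"
    by (auto simp: pos_starts_def)
next
  fix xs assume "xs \<in> (\<lambda>w. trib_list w (j + 3)) ` pos_starts n j"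
  then obtain a b c where w: "xs = trib_list (a, b, c) (j + 3)" "0 < a" "0 < b" "0 < c"
    "snd (snd ((trib_step ^^ j) (a, b, c))) = n"
    by (auto simp: pos_starts_def)
  have "xs ! 0 = a" "xs ! 1 = b" "xs ! 2 = c"
    using w(1) by (simp_all add: eval_nat_numeral)
  then have "is_positive_seq xs"
    using w by (auto simp: is_positive_seq_def eval_nat_numeral less_Suc_eq)
  moreover have "xs \<noteq> []" "last xs = n"
    using w by (auto simp: last_trib_list)
  ultimately show "xs \<in> pos_trib_ending n (j + 3)"
    using w(1) by (simp add: pos_trib_ending_def terminates_at_def is_tribonacci_trib_list)
qed

lemma pos_trib_ending_eq_empty: "nat n + 2 < k \<Longrightarrow> pos_trib_ending n k = {}"
proof -
  assume "nat n + 2 < k"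
  define j where "j = k - 3"
  then have j: "k = j + 3" "n < int j + 1"
    using \<open>nat n + 2 < k\<close> by auto
  have "pos_starts n j = {}"
    using trib_step_pow_third_ge[of _ j] j(2) by (fastforce simp: pos_starts_def)
  then show ?thesis
    unfolding j(1) pos_trib_ending_eq_image by simp
qed

lemma
  assumes "3 \<le> n"
  shows t_ge_4: "4 \<le> t n"
    and pos_trib_ending_Suc_t: "pos_trib_ending n (Suc (t n)) = {}"
proof -
  define P where "P = (\<lambda>k. 0 < k \<and> pos_trib_ending n k \<noteq> {})"
  have bounded: "P k \<Longrightarrow> k \<le> nat n + 2" for k
    using pos_trib_ending_eq_empty[of n k] by (auto simp: P_def)
  have "[1, 1, n - 2, n] \<in> pos_trib_ending n 4"
    using assms
    by (auto simp: pos_trib_ending_def is_tribonacci_def is_positive_seq_def terminates_at_def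
        eval_nat_numeral less_Suc_eq)
  then have "P 4" by (auto simp: P_def)
  then show "4 \<le> t n"
    unfolding t_def P_def[symmetric] using bounded by (blast intro: Greatest_le_nat)
  show "pos_trib_ending n (Suc (t n)) = {}"
  proof (rule ccontr)
    assume "pos_trib_ending n (Suc (t n)) \<noteq> {}"
    then have "P (Suc (t n))"
      by (simp add: P_def)
    then have "Suc (t n) \<le> t n"
      unfolding t_def P_def[symmetric] using bounded by (blast intro: Greatest_le_nat)
    then show False by simp
  qed
qed

lemma tribonacci_constant_exists: "\<exists>x::real. x^3 = x^2 + x + 1 \<and> 1.83 < x \<and> x < 1.85"
proof -
  have "\<exists>x. 1.83 \<le> x \<and> x \<le> 1.85 \<and> (\<lambda>x::real. x^3 - x^2 - x - 1) x = 0"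
    by (rule IVT') (auto intro!: continuous_intros simp: power_def)
  then obtain x :: real where x: "1.83 \<le> x" "x \<le> 1.85" "x^3 - x^2 - x - 1 = 0"
    by auto
  moreover have "(1.83::real)^3 - 1.83^2 - 1.83 - 1 \<noteq> 0" "(1.85::real)^3 - 1.85^2 - 1.85 - 1 \<noteq> 0"
    by (simp_all add: power3_eq_cube power2_eq_square)
  then have "x \<noteq> 1.83" "x \<noteq> 1.85"
    using x(3) by metis+
  ultimately show ?thesis by (intro exI[of _ x]) auto
qed

definition rho :: real where
  "rho = (SOME x. x^3 = x^2 + x + 1 \<and> 1.83 < x \<and> x < 1.85)"

lemma
  shows rho_cubic: "rho^3 = rho^2 + rho + 1"
    and rho_gt: "1.83 < rho"
    and rho_less: "rho < 1.85"
  using someI_ex[OF tribonacci_constant_exists] by (simp_all add: rho_def)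

lemma
  shows rho_sq_gt: "3.34 < rho^2"
    and rho_sq_less: "rho^2 < 3.43"
proof -
  have "1.83 * 1.83 < rho * rho" "rho * rho < 1.85 * 1.85"
    using rho_gt rho_less by (intro mult_strict_mono; simp)+
  then show "3.34 < rho^2" "rho^2 < 3.43" by (simp_all add: power2_eq_square)
qed

(* rho_inv = 1 / rho, by the cubic equation for rho. *)
definition rho_inv :: real where
  "rho_inv = rho^2 - rho - 1"

lemma
  shows rho_inv_gt: "0.49 < rho_inv"
    and rho_inv_less: "rho_inv < 0.6"
  using rho_gt rho_less rho_sq_gt rho_sq_less unfolding rho_inv_def by auto

(*
  lin_form is the left eigenvector of trib_step for rho. quad_form is |a + (z^2 - z) b + z c|^2
  for a complex root z of x^3 = x^2 + x + 1, written with |z|^2 = rho_inv and z + conj z = 1 - rho.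
*)
fun lin_form :: "real triple \<Rightarrow> real" where
  "lin_form (a, b, c) = a + (rho^2 - rho) * b + rho * c"

fun quad_form :: "real triple \<Rightarrow> real" where
  "quad_form (a, b, c) = a^2 + rho_inv * (rho_inv + rho) * b^2 + rho_inv * c^2
     + (rho^2 - rho - 2 * rho_inv) * a * b + (1 - rho) * a * c - rho_inv * (1 + rho) * b * c"

lemma lin_form_trib_step: "lin_form (trib_step (a, b, c)) = rho * lin_form (a, b, c)"
  using rho_cubic by simp algebra

lemma quad_form_trib_step: "rho * quad_form (trib_step (a, b, c)) = quad_form (a, b, c)"
  using rho_cubic rho_inv_def by simp algebra

lemma lin_form_trib_step_pow: "lin_form ((trib_step ^^ j) w) = rho^j * lin_form w"
proof (induction j)
  case (Suc j)
  then show ?case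
    by (cases "(trib_step ^^ j) w") (simp add: lin_form_trib_step del: lin_form.simps trib_step.simps)
qed simp

lemma quad_form_trib_step_pow: "rho^j * quad_form ((trib_step ^^ j) w) = quad_form w"
proof (induction j)
  case (Suc j)
  have "rho^Suc j * quad_form ((trib_step ^^ Suc j) w) =
      rho^j * (rho * quad_form (trib_step ((trib_step ^^ j) w)))"
    by (simp add: mult_ac)
  also have "\<dots> = quad_form w"
    using Suc by (cases "(trib_step ^^ j) w") (simp only: quad_form_trib_step)
  finally show ?case .
qed simp

lemma quad_form_eq_plane: "quad_form (a, b, c) = quad_form (a - c * rho_inv^2, b - c * rho_inv, 0)"
  using rho_cubic rho_inv_def by simp algebra

lemma lin_form_eq_plane:
  "lin_form (a, b, c) =
     (a - c * rho_inv^2) + (rho^2 - rho) * (b - c * rho_inv) + c * rho_inv^2 * (3 + 2 * rho + rho^2)"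
  using rho_cubic rho_inv_def by simp algebra

lemma binary_quadratic_bounds:
  fixes A B x y :: real
  assumes "\<bar>B\<bar> \<le> 0.6" "1.1 \<le> A" "A \<le> 1.5"
  shows "(x^2 + y^2) / 2 \<le> x^2 + A * y^2 + B * x * y"
    and "x^2 + A * y^2 + B * x * y \<le> 2 * (x^2 + y^2)"
proof -
  have "2 * \<bar>x * y\<bar> \<le> x^2 + y^2"
    using sum_squares_bound[of "\<bar>x\<bar>" "\<bar>y\<bar>"] by (simp add: abs_mult)
  moreover have "\<bar>B * x * y\<bar> \<le> 0.6 * \<bar>x * y\<bar>"
    using mult_right_mono[OF assms(1) abs_ge_zero[of "x * y"]] by (simp add: abs_mult mult.assoc)
  moreover have "1.1 * y^2 \<le> A * y^2" "A * y^2 \<le> 1.5 * y^2"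
    using assms(2,3) by (intro mult_right_mono; simp)+
  moreover have "0 \<le> x^2" "0 \<le> y^2"
    by simp_all
  ultimately show "(x^2 + y^2) / 2 \<le> x^2 + A * y^2 + B * x * y"
    and "x^2 + A * y^2 + B * x * y \<le> 2 * (x^2 + y^2)"
    unfolding distrib_left add_divide_distrib abs_le_iff by linarith+
qed

lemma
  shows quad_form_plane_ge: "(x^2 + y^2) / 2 \<le> quad_form (x, y, 0)"
    and quad_form_plane_le: "quad_form (x, y, 0) \<le> 2 * (x^2 + y^2)"
proof -
  have "0.49 * 2.32 < rho_inv * (rho_inv + rho)" "rho_inv * (rho_inv + rho) < 0.6 * 2.45"
    using rho_inv_gt rho_inv_less rho_gt rho_less by (intro mult_strict_mono; simp)+
  moreover have "\<bar>rho^2 - rho - 2 * rho_inv\<bar> \<le> 0.6"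
    using rho_gt rho_less rho_sq_gt rho_sq_less unfolding rho_inv_def by auto
  ultimately show "(x^2 + y^2) / 2 \<le> quad_form (x, y, 0)" "quad_form (x, y, 0) \<le> 2 * (x^2 + y^2)"
    using binary_quadratic_bounds[of "rho^2 - rho - 2 * rho_inv" "rho_inv * (rho_inv + rho)" x y]
    by (simp_all add: algebra_simps)
qed

lemma quad_form_ge_deviation:
  "((a - c * rho_inv^2)^2 + (b - c * rho_inv)^2) / 2 \<le> quad_form (a, b, c)"
  unfolding quad_form_eq_plane[of a b c] by (rule quad_form_plane_ge)

lemma quad_form_le_deviation:
  "quad_form (a, b, c) \<le> 2 * ((a - c * rho_inv^2)^2 + (b - c * rho_inv)^2)"
  unfolding quad_form_eq_plane[of a b c] by (rule quad_form_plane_le)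

lemma lin_form_nonneg_bounds:
  assumes "0 \<le> a" "0 \<le> b" "0 \<le> c"
  shows "0 \<le> lin_form (a, b, c)" and "lin_form (a, b, c) \<le> rho * (a + b + c)"
proof -
  have "1 \<le> rho" "0 \<le> rho^2 - rho" "rho^2 - rho \<le> rho"
    using rho_gt rho_less rho_sq_gt rho_sq_less by auto
  then have "a \<le> rho * a" "0 \<le> (rho^2 - rho) * b" "(rho^2 - rho) * b \<le> rho * b" "0 \<le> rho * c"
    using assms by (auto intro: mult_right_mono mult_nonneg_nonneg simp: mult_le_cancel_right1)
  then show "0 \<le> lin_form (a, b, c)" "lin_form (a, b, c) \<le> rho * (a + b + c)"
    using assms by (simp_all add: distrib_left)
qed

lemma quad_form_le_lin_form_sq:
  assumes "0 \<le> a" "0 \<le> b" "0 \<le> c"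
  shows "quad_form (a, b, c) \<le> (lin_form (a, b, c))^2"
proof -
  have "(1.4::real)^2 \<le> (rho^2 - rho)^2"
    using rho_less rho_sq_gt by (intro power_mono) auto
  moreover have "rho_inv * (rho_inv + rho) < 0.6 * 2.45"
    using rho_inv_gt rho_inv_less rho_gt rho_less by (intro mult_strict_mono) auto
  ultimately have "rho_inv * (rho_inv + rho) \<le> (rho^2 - rho)^2"
    by (simp add: power_divide)
  then have coeffs: "0 \<le> (rho^2 - rho)^2 - rho_inv * (rho_inv + rho)" "0 \<le> rho^2 - rho_inv"
    "0 \<le> rho^2 - rho + 2 * rho_inv" "0 \<le> 3 * rho - 1" "0 \<le> 2 * rho * (rho^2 - rho) + rho_inv * (1 + rho)"
    using rho_gt rho_less rho_sq_gt rho_inv_gt rho_inv_less by (auto intro!: add_nonneg_nonneg mult_nonneg_nonneg)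
  have "(lin_form (a, b, c))^2 - quad_form (a, b, c) =
      ((rho^2 - rho)^2 - rho_inv * (rho_inv + rho)) * b^2 + (rho^2 - rho_inv) * c^2
      + (rho^2 - rho + 2 * rho_inv) * (a * b) + (3 * rho - 1) * (a * c)
      + (2 * rho * (rho^2 - rho) + rho_inv * (1 + rho)) * (b * c)"
    by (simp add: power2_eq_square algebra_simps)
  also have "\<dots> \<ge> 0"
    using coeffs assms rho_less rho_sq_gt rho_inv_gt by (intro add_nonneg_nonneg mult_nonneg_nonneg) auto
  finally show ?thesis by simp
qed

lemma sq_le_of_le_lin_comb:
  fixes l \<alpha> \<beta> x y :: real
  assumes "0 < l" "l \<le> \<alpha> * x + \<beta> * y" "\<bar>\<alpha>\<bar> \<le> 15" "\<bar>\<beta>\<bar> \<le> 15"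
  shows "l^2 \<le> 450 * (x^2 + y^2)"
proof -
  have "\<alpha>^2 \<le> 15^2" "\<beta>^2 \<le> 15^2"
    using power_mono[OF assms(3) abs_ge_zero, of 2] power_mono[OF assms(4) abs_ge_zero, of 2]
    by simp_all
  have "l^2 \<le> (\<alpha> * x + \<beta> * y)^2"
    using assms(1,2) by (intro power_mono) auto
  also have "\<dots> \<le> 2 * (\<alpha> * x)^2 + 2 * (\<beta> * y)^2"
    using sum_squares_bound[of "\<alpha> * x" "\<beta> * y"] unfolding power2_sum by linarith
  also have "\<dots> = 2 * (\<alpha>^2 * x^2) + 2 * (\<beta>^2 * y^2)"
    by (simp add: power_mult_distrib)
  also have "\<dots> \<le> 2 * (15^2 * x^2) + 2 * (15^2 * y^2)"
    using \<open>\<alpha>^2 \<le> 15^2\<close> \<open>\<beta>^2 \<le> 15^2\<close> by (intro add_mono mult_left_mono mult_right_mono) auto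
  finally show ?thesis by simp
qed

(*
  Subtracting the multiple c * rho_inv^2 of the dominant eigenvector (1, rho, rho^2) moves a
  triple into the plane c = 0; off the positive octant, a nonpositive coordinate bounds that
  multiple by the plane coordinates x and y.
*)
lemma lin_form_le_of_not_positive:
  assumes "\<not> positive_triple (a, b, c)"
  defines "x \<equiv> a - c * rho_inv^2" and "y \<equiv> b - c * rho_inv"
  shows "\<exists>\<alpha> \<beta>. \<bar>\<alpha>\<bar> \<le> 15 \<and> \<bar>\<beta>\<bar> \<le> 15 \<and> lin_form (a, b, c) \<le> \<alpha> * x + \<beta> * y"
proof -
  define t where "t = c * rho_inv^2"
  define L where "L = 3 + 2 * rho + rho^2"
  have lin: "lin_form (a, b, c) = x + (rho^2 - rho) * y + t * L"
    unfolding lin_form_eq_plane x_def y_def t_def L_def ..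
  have L: "10 < L" "L < 10.2"
    using rho_gt rho_less rho_sq_gt rho_sq_less by (auto simp: L_def)
  have coeff: "\<bar>rho^2 - rho\<bar> \<le> 15"
    using rho_gt rho_less rho_sq_gt rho_sq_less by auto
  consider "a \<le> 0" | "b \<le> 0" | "c \<le> 0"
    using assms(1) by fastforce
  then show ?thesis
  proof cases
    case 1
    then have "t * L \<le> (- x) * L"
      using L by (intro mult_right_mono) (auto simp: x_def t_def)
    then have "lin_form (a, b, c) \<le> (1 - L) * x + (rho^2 - rho) * y"
      by (simp add: lin algebra_simps del: lin_form.simps)
    moreover have "\<bar>1 - L\<bar> \<le> 15"
      using L by auto
    ultimately show ?thesis
      using coeff by blast
  next
    case 2
    then have "t \<le> - y * rho_inv"
      using rho_inv_gt mult_right_mono[of "c * rho_inv" "- y" rho_inv]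
      by (simp add: t_def y_def power2_eq_square mult.assoc)
    then have "t * L \<le> (- y * rho_inv) * L"
      using L by (intro mult_right_mono) auto
    then have "lin_form (a, b, c) \<le> 1 * x + (rho^2 - rho - rho_inv * L) * y"
      by (simp add: lin algebra_simps del: lin_form.simps)
    moreover have "0.49 * 10 < rho_inv * L" "rho_inv * L < 0.6 * 10.2"
      using L rho_inv_gt rho_inv_less by (intro mult_strict_mono; simp)+
    then have "\<bar>rho^2 - rho - rho_inv * L\<bar> \<le> 15"
      using rho_gt rho_less rho_sq_gt rho_sq_less by auto
    ultimately show ?thesis
      by (metis abs_one one_le_numeral)
  next
    case 3
    then have "t * L \<le> 0"
      using L by (intro mult_nonpos_nonneg) (auto simp: t_def mult_nonpos_nonneg)
    then have "lin_form (a, b, c) \<le> 1 * x + (rho^2 - rho) * y"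
      by (simp add: lin del: lin_form.simps)
    then show ?thesis
      using coeff by (metis abs_one one_le_numeral)
  qed
qed

lemma lin_form_sq_le_quad_form:
  assumes "0 < lin_form w" "\<not> positive_triple w"
  shows "(lin_form w)^2 \<le> 900 * quad_form w"
proof -
  obtain a b c where w: "w = (a, b, c)"
    by (cases w)
  then have "(lin_form w)^2 \<le> 450 * ((a - c * rho_inv^2)^2 + (b - c * rho_inv)^2)"
    using lin_form_le_of_not_positive[of a b c] sq_le_of_le_lin_comb assms by blast
  also have "\<dots> \<le> 900 * quad_form w"
    using quad_form_ge_deviation[of a c b] by (simp add: w)
  finally show ?thesis .
qed

definition near_window :: "int \<Rightarrow> int triple" where
  "near_window n = (round (of_int n * rho_inv^2), round (of_int n * rho_inv), n)"

lemma quad_form_near_window: "quad_form (of_int_triple (near_window n)) \<le> 1"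
proof -
  define d1 where "d1 = of_int (round (of_int n * rho_inv^2)) - of_int n * rho_inv^2"
  define d2 where "d2 = of_int (round (of_int n * rho_inv)) - of_int n * rho_inv"
  have "\<bar>d1\<bar>^2 \<le> (1/2)^2" "\<bar>d2\<bar>^2 \<le> (1/2)^2"
    unfolding d1_def d2_def by (intro power_mono of_int_round_abs_le abs_ge_zero)+
  then have "2 * (d1^2 + d2^2) \<le> 1"
    by (simp add: power_divide)
  moreover have "quad_form (of_int_triple (near_window n)) \<le> 2 * (d1^2 + d2^2)"
    using quad_form_le_deviation by (simp add: near_window_def d1_def d2_def)
  ultimately show ?thesis by linarith
qed

lemma lin_form_near_window:
  assumes "0 \<le> n"
  shows "rho * of_int n \<le> lin_form (of_int_triple (near_window n))"
proof -
  have "0 \<le> of_int n * rho_inv^2" "0 \<le> of_int n * rho_inv"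
    using assms rho_inv_gt by simp_all
  then have "0 \<le> round (of_int n * rho_inv^2)" "0 \<le> round (of_int n * rho_inv)"
    by (metis round_0 round_mono)+
  moreover have "0 \<le> rho^2 - rho"
    using rho_less rho_sq_gt by simp
  ultimately show ?thesis
    by (simp add: near_window_def)
qed

lemma not_positive_trib_step_inv_pow_near_window:
  assumes "pos_trib_ending n (j + 4) = {}"
  shows "\<not> positive_triple ((trib_step_inv ^^ Suc j) (near_window n))"
proof
  assume "positive_triple ((trib_step_inv ^^ Suc j) (near_window n))"
  moreover have "(trib_step ^^ Suc j) ((trib_step_inv ^^ Suc j) (near_window n)) = near_window n"
    by (rule trib_step_pow_inv)
  ultimately have "(trib_step_inv ^^ Suc j) (near_window n) \<in> pos_starts n (Suc j)"
    by (simp only: pos_starts_def mem_Collect_eq) (simp add: near_window_def)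
  then have "pos_trib_ending n (Suc j + 3) \<noteq> {}"
    unfolding pos_trib_ending_eq_image by blast
  with assms show False
    by (simp add: add.commute)
qed

lemma sq_le_of_pos_trib_ending_eq_empty:
  assumes "0 < n" "pos_trib_ending n (j + 4) = {}"
  shows "(of_int n)^2 \<le> 900 * rho^(3 * j + 1)"
proof -
  define W where "W = (trib_step_inv ^^ Suc j) (near_window n)"
  have end_W: "(trib_step ^^ Suc j) W = near_window n"
    unfolding W_def by (rule trib_step_pow_inv)
  have "\<not> positive_triple W"
    unfolding W_def using assms(2) by (rule not_positive_trib_step_inv_pow_near_window)
  define w :: "real triple" where "w = of_int_triple W"
  define e :: "real triple" where "e = of_int_triple (near_window n)"
  have e_w: "e = (trib_step ^^ Suc j) w"
    unfolding e_def w_def end_W[symmetric] by (rule of_int_triple_trib_step_pow)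
  have lin_e: "lin_form e = rho^Suc j * lin_form w"
    unfolding e_w by (rule lin_form_trib_step_pow)
  have quad_e: "rho^Suc j * quad_form e = quad_form w"
    unfolding e_w by (rule quad_form_trib_step_pow)
  have rho_n: "rho * of_int n \<le> lin_form e"
    using lin_form_near_window assms(1) by (simp add: e_def)
  moreover have "0 < rho * of_int n"
    using assms(1) rho_gt by simp
  ultimately have "0 < rho^Suc j * lin_form w"
    unfolding lin_e by linarith
  moreover have "0 < rho^Suc j"
    using rho_gt by simp
  ultimately have "0 < lin_form w"
    using zero_less_mult_pos by blast
  then have lin_quad_w: "(lin_form w)^2 \<le> 900 * quad_form w"
    using lin_form_sq_le_quad_form \<open>\<not> positive_triple W\<close> by (simp add: w_def positive_of_int_triple)
  have "rho^2 * (of_int n)^2 \<le> (lin_form e)^2"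
    using rho_n \<open>0 < rho * of_int n\<close> power_mono[of "rho * of_int n" "lin_form e" 2]
    by (simp add: power_mult_distrib)
  also have "\<dots> = (rho^Suc j)^2 * (lin_form w)^2"
    by (simp add: lin_e power_mult_distrib)
  also have "\<dots> \<le> (rho^Suc j)^2 * (900 * quad_form w)"
    using lin_quad_w by (intro mult_left_mono) auto
  also have "\<dots> = 900 * (rho^Suc j)^3 * quad_form e"
    by (simp flip: quad_e add: power2_eq_square power3_eq_cube mult_ac)
  also have "\<dots> \<le> 900 * (rho^Suc j)^3"
    using quad_form_near_window[of n] rho_gt by (simp add: e_def)
  also have "\<dots> = rho^2 * (900 * rho^(3 * j + 1))"
  proof -
    have "Suc j * 3 = 2 + (3 * j + 1)" by simp
    then show ?thesis
      by (simp only: power_mult[symmetric] power_add mult_ac)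
  qed
  finally show ?thesis
    using rho_gt by simp
qed

lemma quad_form_trib_step_pow_le:
  fixes w :: "real triple"
  assumes "positive_triple w" "0 < m"
  shows "rho^(3 * m) * quad_form ((trib_step ^^ m) w) \<le> rho^4 * (snd (snd ((trib_step ^^ m) w)))^2"
proof -
  define e where "e = (trib_step ^^ m) w"
  obtain i where m: "m = Suc i"
    using assms(2) gr0_conv_Suc by blast
  obtain a b c where prev: "(trib_step ^^ i) w = (a, b, c)"
    by (metis prod.exhaust)
  then have abc: "0 < a" "0 < b" "0 < c"
    using positive_trib_step_pow[OF assms(1), of i] by simp_all
  have e: "e = trib_step (a, b, c)"
    using prev by (simp add: e_def m del: trib_step.simps)
  then have lin_e: "lin_form e = rho * lin_form (a, b, c)"
    by (simp only: lin_form_trib_step)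
  have third_e: "snd (snd e) = a + b + c"
    using e by simp
  have "0 \<le> lin_form e" "lin_form e \<le> rho^2 * snd (snd e)"
    using lin_form_nonneg_bounds[of a b c] abc rho_gt
    by (simp_all add: lin_e third_e power2_eq_square mult.assoc)
  then have lin_e_sq: "(lin_form e)^2 \<le> rho^4 * (snd (snd e))^2"
    using power_mono[of "lin_form e" "rho^2 * snd (snd e)" 2] by (simp add: power_mult_distrib flip: power_mult)
  obtain a0 b0 c0 where w: "w = (a0, b0, c0)"
    by (metis prod.exhaust)
  have "quad_form w \<le> (lin_form w)^2"
    using assms(1) quad_form_le_lin_form_sq[of a0 b0 c0] by (simp add: w)
  have "rho^(3 * m) * quad_form e = rho^(2 * m) * (rho^m * quad_form e)"
    by (simp add: power_add[symmetric] mult.assoc)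
  also have "\<dots> = rho^(2 * m) * quad_form w"
    by (simp add: e_def quad_form_trib_step_pow)
  also have "\<dots> \<le> rho^(2 * m) * (lin_form w)^2"
    using \<open>quad_form w \<le> (lin_form w)^2\<close> rho_gt by (intro mult_left_mono) auto
  also have "\<dots> = (lin_form e)^2"
    by (simp add: e_def lin_form_trib_step_pow power_mult_distrib power_mult[symmetric] mult.commute)
  finally show ?thesis
    using lin_e_sq by (simp add: e_def)
qed

lemma trib_step_pow_near_dominant:
  assumes "0 < n" "0 < m" "pos_trib_ending n (m + 4) = {}" "w \<in> pos_starts n m"
  shows "\<bar>of_int (fst ((trib_step ^^ m) w)) - of_int n * rho_inv^2\<bar> < 250"
    and "\<bar>of_int (fst (snd ((trib_step ^^ m) w))) - of_int n * rho_inv\<bar> < 250"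
proof -
  define e :: "real triple" where "e = of_int_triple ((trib_step ^^ m) w)"
  have w: "positive_triple w" "snd (snd ((trib_step ^^ m) w)) = n"
    using assms(4) by (simp_all add: pos_starts_def)
  obtain x y where xy: "(trib_step ^^ m) w = (x, y, n)"
    using w(2) by (metis prod.collapse)
  have "e = (trib_step ^^ m) (of_int_triple w)"
    unfolding e_def by (rule of_int_triple_trib_step_pow)
  moreover have "snd (snd e) = of_int n"
    by (simp add: e_def xy)
  ultimately have "rho^(3 * m) * quad_form e \<le> rho^4 * (of_int n)^2"
    using quad_form_trib_step_pow_le[of "of_int_triple w" m] assms(2) w(1)
    by (simp add: positive_of_int_triple)
  also have "\<dots> \<le> rho^4 * (900 * rho^(3 * m + 1))"
    using sq_le_of_pos_trib_ending_eq_empty[OF assms(1,3)] rho_gt by (intro mult_left_mono) auto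
  also have "\<dots> = rho^(3 * m) * (900 * rho^5)"
    by (simp add: power_add eval_nat_numeral mult_ac)
  finally have "quad_form e \<le> 900 * rho^5"
    using rho_gt by simp
  also have "\<dots> \<le> 900 * 2^5"
    using rho_gt rho_less by (intro mult_left_mono power_mono) auto
  finally have "quad_form e \<le> 28800"
    by simp
  moreover have "((of_int x - of_int n * rho_inv^2)^2 + (of_int y - of_int n * rho_inv)^2) / 2 \<le> quad_form e"
    using quad_form_ge_deviation by (simp add: e_def xy)
  ultimately have "(of_int x - of_int n * rho_inv^2)^2 < 62500" "(of_int y - of_int n * rho_inv)^2 < 62500"
    using zero_le_power2[of "of_int x - of_int n * rho_inv^2"] zero_le_power2[of "of_int y - of_int n * rho_inv"]
    unfolding add_divide_distrib by linarith+
  then have "\<bar>of_int x - of_int n * rho_inv^2\<bar> < 250" "\<bar>of_int y - of_int n * rho_inv\<bar> < (250::real)"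
    using power2_less_imp_less[of "\<bar>d\<bar>" 250 for d :: real] by simp_all
  then show "\<bar>of_int (fst ((trib_step ^^ m) w)) - of_int n * rho_inv^2\<bar> < 250"
    and "\<bar>of_int (fst (snd ((trib_step ^^ m) w))) - of_int n * rho_inv\<bar> < 250"
    by (simp_all add: xy)
qed

lemma
  fixes r :: real
  shows finite_ints_near: "finite {i::int. \<bar>of_int i - r\<bar> < of_nat N}"
    and card_ints_near_le: "card {i::int. \<bar>of_int i - r\<bar> < of_nat N} \<le> 2 * N"
proof -
  have sub: "{i::int. \<bar>of_int i - r\<bar> < of_nat N} \<subseteq>
      {\<lfloor>r\<rfloor> - int N + 1 .. \<lfloor>r\<rfloor> + int N}"
  proof
    fix i :: int assume "i \<in> {i. \<bar>of_int i - r\<bar> < of_nat N}"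
    then have "r - N < of_int i" "of_int i < r + N"
      by auto
    moreover have "of_int \<lfloor>r\<rfloor> \<le> r" "r < of_int \<lfloor>r\<rfloor> + 1"
      by linarith+
    ultimately have "\<lfloor>r\<rfloor> - int N < i" "i < \<lfloor>r\<rfloor> + int N + 1"
      by linarith+
    then show "i \<in> {\<lfloor>r\<rfloor> - int N + 1 .. \<lfloor>r\<rfloor> + int N}"
      by simp
  qed
  then show "finite {i::int. \<bar>of_int i - r\<bar> < of_nat N}"
    using finite_subset by blast
  show "card {i::int. \<bar>of_int i - r\<bar> < of_nat N} \<le> 2 * N"
    using card_mono[OF _ sub] by simp
qed

lemma
  assumes "0 < n" "0 < m" "pos_trib_ending n (m + 4) = {}"
  shows finite_pos_starts: "finite (pos_starts n m)"
    and card_pos_starts_le: "card (pos_starts n m) \<le> 500 * 500"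
proof -
  define g where "g w = (fst ((trib_step ^^ m) w), fst (snd ((trib_step ^^ m) w)))" for w :: "int triple"
  define B1 where "B1 = {i::int. \<bar>of_int i - of_int n * rho_inv^2\<bar> < of_nat 250}"
  define B2 where "B2 = {i::int. \<bar>of_int i - of_int n * rho_inv\<bar> < of_nat 250}"
  have inj: "inj_on g (pos_starts n m)"
  proof (rule inj_onI)
    fix v w assume "v \<in> pos_starts n m" "w \<in> pos_starts n m" "g v = g w"
    then have "(trib_step ^^ m) v = (trib_step ^^ m) w"
      by (simp add: pos_starts_def g_def prod_eq_iff)
    then show "v = w"
      using inj_trib_step_pow by (metis injD)
  qed
  have img: "g ` pos_starts n m \<subseteq> B1 \<times> B2"
    using trib_step_pow_near_dominant[OF assms] by (auto simp: g_def B1_def B2_def)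
  have B: "finite B1" "card B1 \<le> 500" "finite B2" "card B2 \<le> 500"
    unfolding B1_def B2_def
    using finite_ints_near[of "of_int n * rho_inv^2" 250] finite_ints_near[of "of_int n * rho_inv" 250]
      card_ints_near_le[of "of_int n * rho_inv^2" 250] card_ints_near_le[of "of_int n * rho_inv" 250]
    by simp_all
  then have fin_B: "finite (B1 \<times> B2)" and card_B: "card (B1 \<times> B2) \<le> 500 * 500"
    using mult_le_mono[OF B(2,4)] by (simp_all only: finite_cartesian_product card_cartesian_product)
  show "finite (pos_starts n m)"
    by (rule inj_on_finite[OF inj img fin_B])
  show "card (pos_starts n m) \<le> 500 * 500"
    using card_inj_on_le[OF inj img fin_B] card_B by linarith
qed

lemma card_pos_trib_ending_le:
  assumes "0 < n" "4 \<le> k" "pos_trib_ending n (Suc k) = {}"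
  shows "finite (pos_trib_ending n k) \<and> card (pos_trib_ending n k) \<le> 500^2"
proof -
  define m where "m = k - 3"
  have "Suc k = m + 4"
    using assms(2) by (simp add: m_def)
  then have k: "k = m + 3" "0 < m" "pos_trib_ending n (m + 4) = {}"
    using assms(2,3) by (simp_all add: m_def)
  have "card ((\<lambda>w. trib_list w k) ` pos_starts n m) \<le> 500 * 500"
    using card_image_le[OF finite_pos_starts[OF assms(1) k(2,3)], of "\<lambda>w. trib_list w k"]
      card_pos_starts_le[OF assms(1) k(2,3)] by linarith
  then show ?thesis
    unfolding k(1) pos_trib_ending_eq_image
    using finite_pos_starts[OF assms(1) k(2,3)] by (simp add: k(1))
qed

theorem theorem1:
  fixes n :: int
  assumes "n \<ge> 3"
  shows "finite (pos_trib_ending n (t n)) \<and> card (pos_trib_ending n (t n)) \<le> 561001"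
proof -
  have "0 < n" using assms by simp
  from card_pos_trib_ending_le[OF this t_ge_4[OF assms] pos_trib_ending_Suc_t[OF assms]]
  show ?thesis by simp
qed

end
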